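(* For $n\ge1$, \[\frac{2^n\,A_{n+1}(z)}{z}=\sum_{k=0}^{n}\binom nk B_k(z)\,B_{n-k}(z).\]
   Context: $A_n(z)=\sum_{\sigma\in\mathfrak S_n}z^{\mathrm{des}(\sigma)+1}$, where $\mathrm{des}(\sigma)=\#\{i\in[n-1]:\sigma_i>\sigma_{i+1}\}$. $\mathfrak B_k$ is the set of signed permutations $\pi=\pi_1\cdots\pi_k$ (words over $\{\pm1,\dots,\pm k\}$ with $|\pi_1|,\dots,|\pi_k|$ a permutation of $[k]$), compared as integers, with $\pi_0=0$; $\mathrm{des}_B(\pi)=\#\{i\in\{0,\dots,k-1\}:\pi_i>\pi_{i+1}\}$ and $B_k(z)=\sum_{\pi\in\mathfrak B_k}z^{\mathrm{des}_B(\pi)}$, with $B_0(z)=1$. *)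

theory Defs
  imports Complex_Main
begin

(* Permutations of [n] in one-line notation: lists sigma_1 ... sigma_n (0-indexed list). *)
definition perms :: "nat \<Rightarrow> nat list set" where
  "perms n = {s. distinct s \<and> set s = {1..n}}"

definition des :: "nat list \<Rightarrow> nat" where
  "des s = card {i. i + 1 < length s \<and> s ! i > s ! (i + 1)}"

definition eulerA :: "nat \<Rightarrow> real \<Rightarrow> real" where
  "eulerA n z = (\<Sum>s\<in>perms n. z ^ (des s + 1))"

definition signed_perms :: "nat \<Rightarrow> int list set" where
  "signed_perms k = {p. distinct (map abs p) \<and> set (map abs p) = int ` {1..k}}"

definition desB :: "int list \<Rightarrow> nat" where
  "desB p = (let q = 0 # p in card {i. i + 1 < length q \<and> q ! i > q ! (i + 1)})"

definition eulerB :: "nat \<Rightarrow> real \<Rightarrow> real" where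
  "eulerB k z = (\<Sum>p\<in>signed_perms k. z ^ desB p)"

end

(*
  Inserting the letter n+1 into one of the n+1 gaps of a permutation of [n], written with a
  leading 0, keeps the number of descents at a descent and at the end, and raises it by one
  elsewhere. Inserting k+1 or -(k+1) into a signed permutation works alike, except that
  -(k+1) raises the count exactly at the non-descents. With A_n(z) = z P_n(z) this gives
    P_(n+1) = (1 + n z) P_n + (1 - z) z P_n'  and  B_(k+1) = (1 + (2k+1) z) B_k + 2 (1 - z) z B_k',
  solved by the power series P_n = (1-z)^(n+1) sum_m (m+1)^n z^m and
  B_k = (1-z)^(k+1) sum_m (2m+1)^k z^m. By the binomial theorem the coefficient of z^m in
  (1-z)^-(n+2) sum_k C(n,k) B_k B_(n-k) is sum_(i<=m) (2i+1 + 2(m-i)+1)^n = 2^n (m+1)^(n+1),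
  the coefficient of z^m in 2^n (1-z)^-(n+2) P_(n+1).
*)

theory Submission
  imports Defs "HOL-Computational_Algebra.Polynomial_FPS"
begin

unbundle fps_syntax

section \<open>Descents of lists\<close>

fun count_descents :: "'a::linorder list \<Rightarrow> nat" where
  "count_descents (a # b # xs) = of_bool (b < a) + count_descents (b # xs)"
| "count_descents _ = 0"

lemma card_descents:
  "card {i. i + 1 < length xs \<and> xs ! i > xs ! (i + 1)} = count_descents xs"
proof (induction xs rule: count_descents.induct)
  case (1 a b xs)
  let ?D = "\<lambda>ys. {i. i + 1 < length ys \<and> ys ! i > ys ! (i + 1)}"
  have "?D (a # b # xs) = (if b < a then {0} else {}) \<union> Suc ` ?D (b # xs)"
  proof (rule set_eqI)
    show "i \<in> ?D (a # b # xs) \<longleftrightarrow> i \<in> (if b < a then {0} else {}) \<union> Suc ` ?D (b # xs)" for i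
      by (cases i) auto
  qed
  moreover have "finite (?D (b # xs))"
    by (rule finite_subset[of _ "{..<length (b # xs)}"]) auto
  ultimately show ?case
    using "1.IH" by (simp add: card_image card_insert_if)
qed simp_all

lemma card_descent_positions:
  "card {i\<in>{..<length q}. Suc i < length q \<and> q ! Suc i < q ! i} = count_descents q"
  by (subst card_descents[symmetric]) (auto intro: arg_cong[where f = card])

lemma count_descents_le: "count_descents xs \<le> length xs - 1"
  by (induction xs rule: count_descents.induct) auto

lemma count_descents_Cons:
  "count_descents (a # xs) = of_bool (xs \<noteq> [] \<and> hd xs < a) + count_descents xs"
  by (cases xs) auto

lemma count_descents_append:
  "count_descents (xs @ ys) =
     count_descents xs + of_bool (xs \<noteq> [] \<and> ys \<noteq> [] \<and> hd ys < last xs) + count_descents ys"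
  by (induction xs) (auto simp: count_descents_Cons)

lemma des_eq_count_descents: "des s = count_descents (0 # s)"
  unfolding des_def card_descents by (simp add: count_descents_Cons)

lemma desB_eq_count_descents: "desB p = count_descents (0 # p)"
  unfolding desB_def Let_def card_descents ..

section \<open>Inserting a letter\<close>

definition insert_at :: "nat \<Rightarrow> 'a \<Rightarrow> 'a list \<Rightarrow> 'a list" where
  "insert_at j y xs = take j xs @ y # drop j xs"

lemma Cons_insert_at: "a # insert_at j y xs = insert_at (Suc j) y (a # xs)"
  by (simp add: insert_at_def)

lemma map_insert_at: "map f (insert_at j y xs) = insert_at j (f y) (map f xs)"
  by (simp add: insert_at_def take_map drop_map)

lemma mset_insert_at: "mset (insert_at j y xs) = add_mset y (mset xs)"
  by (metis append_take_drop_id insert_at_def mset.simps(2) mset_append union_mset_add_mset_right)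

lemma distinct_insert_at: "distinct (insert_at j y xs) \<longleftrightarrow> distinct (y # xs)"
  by (rule mset_eq_imp_distinct_iff) (simp add: mset_insert_at)

lemma set_insert_at: "set (insert_at j y xs) = insert y (set xs)"
  by (metis mset_insert_at set_mset_add_mset_insert set_mset_mset)

lemma count_descents_insert_at:
  assumes "i < length q"
  shows "count_descents (insert_at (Suc i) y q) + of_bool (Suc i < length q \<and> q ! Suc i < q ! i) =
           count_descents q + of_bool (y < q ! i) + of_bool (Suc i < length q \<and> q ! Suc i < y)"
proof -
  let ?T = "take (Suc i) q" and ?D = "drop (Suc i) q"
  have T: "?T \<noteq> []" "last ?T = q ! i"
    using assms by (auto simp: take_Suc_conv_app_nth)
  have D: "?D \<noteq> [] \<longleftrightarrow> Suc i < length q" "?D \<noteq> [] \<Longrightarrow> hd ?D = q ! Suc i"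
    by (auto simp: hd_drop_conv_nth)
  have "count_descents (insert_at (Suc i) y q) = count_descents ?T + of_bool (y < q ! i)
      + of_bool (Suc i < length q \<and> q ! Suc i < y) + count_descents ?D"
    using T D by (simp add: insert_at_def count_descents_append count_descents_Cons)
  moreover have "count_descents q = count_descents ?T
      + of_bool (Suc i < length q \<and> q ! Suc i < q ! i) + count_descents ?D"
    using count_descents_append[of ?T ?D] T D by simp
  ultimately show ?thesis
    by simp
qed

lemma count_descents_insert_at_greatest:
  assumes "i < length q" and "\<forall>v\<in>set q. v < y"
  shows "count_descents (insert_at (Suc i) y q) =
           count_descents q + of_bool (Suc i < length q \<and> \<not> q ! Suc i < q ! i)"
proof -
  have "q ! i < y" "Suc i < length q \<Longrightarrow> q ! Suc i < y"
    using assms by auto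
  then show ?thesis
    using count_descents_insert_at[OF assms(1), of y] by (cases "Suc i < length q") auto
qed

lemma count_descents_insert_at_least:
  assumes "i < length q" and "\<forall>v\<in>set q. y < v"
  shows "count_descents (insert_at (Suc i) y q) =
           count_descents q + of_bool (\<not> (Suc i < length q \<and> q ! Suc i < q ! i))"
proof -
  have "y < q ! i" "Suc i < length q \<Longrightarrow> y < q ! Suc i"
    using assms by auto
  then show ?thesis
    using count_descents_insert_at[OF assms(1), of y] by (cases "Suc i < length q") auto
qed

lemma sum_power_add_of_bool:
  fixes x :: "'a::comm_semiring_1"
  assumes "finite A"
  shows "(\<Sum>i\<in>A. x ^ (d + of_bool (P i))) =
           of_nat (card {i\<in>A. \<not> P i}) * x ^ d + of_nat (card {i\<in>A. P i}) * x ^ Suc d"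
proof -
  have "(\<Sum>i\<in>A. x ^ (d + of_bool (P i))) = (\<Sum>i\<in>A. if P i then x ^ Suc d else x ^ d)"
    by (rule sum.cong) auto
  also have "\<dots> = of_nat (card {i\<in>A. P i}) * x ^ Suc d + of_nat (card {i\<in>A. \<not> P i}) * x ^ d"
    using assms by (simp add: sum.If_cases Int_def Collect_conj_eq[symmetric] Compl_eq conj_commute)
  finally show ?thesis
    by (simp add: add.commute)
qed

lemma fps_XD_fps_X_power: "fps_XD (fps_X ^ d) = of_nat d * (fps_X ^ d :: 'a::comm_ring_1 fps)"
  by (simp add: fps_XD_def fps_mult_fps_X_deriv_shift fps_eq_iff)

lemma sum_insert_at_greatest:
  fixes xs :: "'a::linorder list"
  assumes "\<forall>v\<in>set (a # xs). v < y"
  shows "(\<Sum>j\<le>length xs. (fps_X :: 'b::comm_ring_1 fps) ^ count_descents (a # insert_at j y xs)) =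
           (1 + of_nat (length xs) * fps_X) * fps_X ^ count_descents (a # xs)
           + (1 - fps_X) * fps_XD (fps_X ^ count_descents (a # xs))"
proof -
  define q where "q = a # xs"
  define L d where "L = length q - 1" and "d = count_descents q"
  define Des where "Des = {i\<in>{..<length q}. Suc i < length q \<and> q ! Suc i < q ! i}"
  have Des: "card Des = d" "Des \<subseteq> {..<L}"
    using card_descent_positions[of q] by (auto simp: Des_def L_def d_def)
  have "card {i\<in>{..<length q}. \<not> (Suc i < length q \<and> \<not> q ! Suc i < q ! i)} = d + 1"
  proof -
    have "{i\<in>{..<length q}. \<not> (Suc i < length q \<and> \<not> q ! Suc i < q ! i)} = insert L Des"
      by (auto simp: Des_def L_def q_def)
    moreover have "finite Des" "L \<notin> Des"
      using Des(2) finite_subset by auto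
    ultimately show ?thesis
      using Des(1) by simp
  qed
  moreover have "card {i\<in>{..<length q}. Suc i < length q \<and> \<not> q ! Suc i < q ! i} = L - d"
  proof -
    have "{i\<in>{..<length q}. Suc i < length q \<and> \<not> q ! Suc i < q ! i} = {..<L} - Des"
      by (auto simp: Des_def L_def)
    then show ?thesis
      using Des by (simp add: card_Diff_subset finite_subset)
  qed
  moreover have "\<forall>v\<in>set q. v < y"
    using assms by (simp add: q_def)
  ultimately have "(\<Sum>i<length q. (fps_X :: 'b fps) ^ count_descents (insert_at (Suc i) y q)) =
      of_nat (d + 1) * fps_X ^ d + of_nat (L - d) * fps_X ^ Suc d"
    by (simp add: count_descents_insert_at_greatest sum_power_add_of_bool d_def)
  also have "\<dots> = (1 + of_nat L * fps_X) * fps_X ^ d + (1 - fps_X) * fps_XD (fps_X ^ d)"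
    using count_descents_le[of q] unfolding L_def[symmetric] d_def[symmetric]
    by (simp add: fps_XD_fps_X_power algebra_simps)
  finally show ?thesis
    by (simp add: L_def d_def q_def Cons_insert_at lessThan_Suc_atMost)
qed

lemma sum_insert_at_least:
  fixes xs :: "'a::linorder list"
  assumes "\<forall>v\<in>set (a # xs). y < v"
  shows "(\<Sum>j\<le>length xs. (fps_X :: 'b::comm_ring_1 fps) ^ count_descents (a # insert_at j y xs)) =
           of_nat (Suc (length xs)) * fps_X * fps_X ^ count_descents (a # xs)
           + (1 - fps_X) * fps_XD (fps_X ^ count_descents (a # xs))"
proof -
  define q where "q = a # xs"
  define d where "d = count_descents q"
  define Des where "Des = {i\<in>{..<length q}. Suc i < length q \<and> q ! Suc i < q ! i}"
  have Des: "card Des = d" "Des \<subseteq> {..<length q}"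
    using card_descent_positions[of q] by (auto simp: Des_def d_def)
  moreover have "card {i\<in>{..<length q}. \<not> (Suc i < length q \<and> q ! Suc i < q ! i)} = length q - d"
  proof -
    have "{i\<in>{..<length q}. \<not> (Suc i < length q \<and> q ! Suc i < q ! i)} = {..<length q} - Des"
      by (auto simp: Des_def)
    then show ?thesis
      using Des finite_subset[OF Des(2)] by (simp add: card_Diff_subset)
  qed
  moreover have "\<forall>v\<in>set q. y < v"
    using assms by (simp add: q_def)
  ultimately have "(\<Sum>i<length q. (fps_X :: 'b fps) ^ count_descents (insert_at (Suc i) y q)) =
      of_nat d * fps_X ^ d + of_nat (length q - d) * fps_X ^ Suc d"
    by (simp add: count_descents_insert_at_least sum_power_add_of_bool d_def Des_def)
  also have "\<dots> = of_nat (length q) * fps_X * fps_X ^ d + (1 - fps_X) * fps_XD (fps_X ^ d)"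
    using count_descents_le[of q] unfolding d_def[symmetric]
    by (simp add: fps_XD_fps_X_power algebra_simps)
  finally show ?thesis
    by (simp add: d_def q_def Cons_insert_at lessThan_Suc_atMost)
qed

lemma sum_insert_at_extremes:
  fixes xs :: "'a::linorder list"
  assumes "\<forall>v\<in>set (a # xs). lo < v \<and> v < hi"
  shows "(\<Sum>j\<le>length xs. (fps_X :: 'b::comm_ring_1 fps) ^ count_descents (a # insert_at j hi xs))
           + (\<Sum>j\<le>length xs. fps_X ^ count_descents (a # insert_at j lo xs)) =
           (1 + of_nat (2 * length xs + 1) * fps_X) * fps_X ^ count_descents (a # xs)
           + 2 * (1 - fps_X) * fps_XD (fps_X ^ count_descents (a # xs))"
  using assms by (simp add: sum_insert_at_greatest sum_insert_at_least algebra_simps)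

section \<open>Lists whose images enumerate a set\<close>

definition perm_lists :: "('a \<Rightarrow> 'b) \<Rightarrow> 'b set \<Rightarrow> 'a list set" where
  "perm_lists f B = {xs. distinct (map f xs) \<and> set (map f xs) = B}"

lemma length_perm_lists: "xs \<in> perm_lists f B \<Longrightarrow> length xs = card B"
  unfolding perm_lists_def using distinct_card[of "map f xs"] by simp

lemma finite_perm_lists:
  assumes "finite (f -` B)"
  shows "finite (perm_lists f B)"
proof (rule finite_subset)
  show "perm_lists f B \<subseteq> {xs. set xs \<subseteq> f -` B \<and> length xs = card B}"
    using length_perm_lists by (auto simp: perm_lists_def)
  show "finite {xs. set xs \<subseteq> f -` B \<and> length xs = card B}"
    using assms by (rule finite_lists_length_eq)
qed

lemma insert_at_in_perm_lists:
  assumes "xs \<in> perm_lists f B" and "f y \<notin> B"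
  shows "insert_at j y xs \<in> perm_lists f (insert (f y) B)"
  using assms by (simp add: perm_lists_def map_insert_at set_insert_at distinct_insert_at)

lemma insert_at_eq_insert_atD:
  assumes eq: "insert_at j y xs = insert_at j' y' xs'"
    and "f y = f y'" and "f y \<notin> f ` set xs" and "f y \<notin> f ` set xs'"
    and "j \<le> length xs" and "j' \<le> length xs'" and "length xs = length xs'"
  shows "y = y' \<and> xs = xs' \<and> j = j'"
proof -
  have "f y \<notin> set (map f (take j xs))" "f y \<notin> set (map f (drop j xs))"
    using assms(3) by (auto dest: in_set_takeD in_set_dropD)
  moreover have "map f (take j xs) @ f y # map f (drop j xs) = map f (take j' xs') @ f y # map f (drop j' xs')"
    using arg_cong[OF eq, of "map f"] assms(2) by (simp add: insert_at_def)
  ultimately have "map f (take j xs) = map f (take j' xs') \<and> map f (drop j xs) = map f (drop j' xs')"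
    by (rule append_Cons_eq_iff[THEN iffD1])
  then have "j = j'"
    using assms(5-7) by (metis length_map length_take min.absorb2)
  then have "take j xs = take j xs' \<and> y = y' \<and> drop j xs = drop j xs'"
    using eq assms(7) by (simp add: insert_at_def)
  then show ?thesis
    using \<open>j = j'\<close> by (metis append_take_drop_id)
qed

lemma perm_lists_insertE:
  assumes t: "t \<in> perm_lists f (insert b B)" and "b \<notin> B"
  obtains y xs j where "f y = b" and "xs \<in> perm_lists f B" and "j \<le> length xs"
    and "t = insert_at j y xs"
proof -
  have "b \<in> f ` set t"
    using t by (simp add: perm_lists_def)
  then obtain y where "y \<in> set t" "f y = b"
    by blast
  then obtain xs ys where t_eq: "t = xs @ y # ys"
    by (meson split_list)
  have t_ins: "t = insert_at (length xs) y (xs @ ys)"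
    by (simp add: insert_at_def t_eq)
  have "distinct (b # map f (xs @ ys))" "insert b (set (map f (xs @ ys))) = insert b B"
    using t \<open>f y = b\<close> unfolding t_ins perm_lists_def mem_Collect_eq
    by (simp_all only: map_insert_at distinct_insert_at set_insert_at)
  then have "xs @ ys \<in> perm_lists f B"
    using \<open>b \<notin> B\<close> insert_ident[of b "set (map f (xs @ ys))" B] by (simp add: perm_lists_def image_Un)
  with \<open>f y = b\<close> t_ins show ?thesis
    by (intro that) simp_all
qed

lemma bij_betw_insert_at_perm_lists:
  assumes "b \<notin> B"
  shows "bij_betw (\<lambda>(y, xs, j). insert_at j y xs)
           (SIGMA y:f -` {b}. SIGMA xs:perm_lists f B. {..length xs}) (perm_lists f (insert b B))"
  unfolding bij_betw_def
proof (intro conjI subset_antisym)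
  have fresh: "b \<notin> f ` set xs" and len: "length xs = card B" if "xs \<in> perm_lists f B" for xs
    using that assms by (auto simp: perm_lists_def length_perm_lists)
  show "inj_on (\<lambda>(y, xs, j). insert_at j y xs) (SIGMA y:f -` {b}. SIGMA xs:perm_lists f B. {..length xs})"
  proof (rule inj_onI)
    fix u v
    assume u: "u \<in> (SIGMA y:f -` {b}. SIGMA xs:perm_lists f B. {..length xs})"
      and v: "v \<in> (SIGMA y:f -` {b}. SIGMA xs:perm_lists f B. {..length xs})"
      and eq: "(\<lambda>(y, xs, j). insert_at j y xs) u = (\<lambda>(y, xs, j). insert_at j y xs) v"
    obtain y xs j y' xs' j' where uv: "u = (y, xs, j)" "v = (y', xs', j')"
      by (metis prod_cases3)
    have "y = y' \<and> xs = xs' \<and> j = j'"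
    proof (rule insert_at_eq_insert_atD[where f = f])
      show "insert_at j y xs = insert_at j' y' xs'"
        using eq by (simp add: uv)
    qed (use u v uv fresh len in auto)
    then show "u = v"
      by (simp add: uv)
  qed
  show "(\<lambda>(y, xs, j). insert_at j y xs) ` (SIGMA y:f -` {b}. SIGMA xs:perm_lists f B. {..length xs})
          \<subseteq> perm_lists f (insert b B)"
  proof (rule image_subsetI)
    fix u assume "u \<in> (SIGMA y:f -` {b}. SIGMA xs:perm_lists f B. {..length xs})"
    then obtain y xs j where "u = (y, xs, j)" "f y = b" "xs \<in> perm_lists f B"
      by auto
    then show "(\<lambda>(y, xs, j). insert_at j y xs) u \<in> perm_lists f (insert b B)"
      using insert_at_in_perm_lists[of xs f B y j] assms by simp
  qed
  show "perm_lists f (insert b B)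
          \<subseteq> (\<lambda>(y, xs, j). insert_at j y xs) ` (SIGMA y:f -` {b}. SIGMA xs:perm_lists f B. {..length xs})"
  proof
    fix t assume "t \<in> perm_lists f (insert b B)"
    then obtain y xs j where "f y = b" "xs \<in> perm_lists f B" "j \<le> length xs" "t = insert_at j y xs"
      using assms by (rule perm_lists_insertE)
    then show "t \<in> (\<lambda>(y, xs, j). insert_at j y xs) ` (SIGMA y:f -` {b}. SIGMA xs:perm_lists f B. {..length xs})"
      by (intro image_eqI[of _ _ "(y, xs, j)"]) simp_all
  qed
qed

lemma sum_perm_lists_insert:
  assumes "b \<notin> B" and "finite (f -` insert b B)"
  shows "(\<Sum>t\<in>perm_lists f (insert b B). g t) =
           (\<Sum>y\<in>f -` {b}. \<Sum>xs\<in>perm_lists f B. \<Sum>j\<le>length xs. g (insert_at j y xs))"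
proof -
  have "finite (f -` {b})" "finite (f -` B)"
    using assms(2) by (auto intro: finite_subset[OF vimage_mono])
  then have "finite (f -` {b})" "finite (perm_lists f B)"
    by (simp_all add: finite_perm_lists)
  then have "(\<Sum>y\<in>f -` {b}. \<Sum>xs\<in>perm_lists f B. \<Sum>j\<le>length xs. g (insert_at j y xs)) =
      (\<Sum>(y, xs, j)\<in>(SIGMA y:f -` {b}. SIGMA xs:perm_lists f B. {..length xs}). g (insert_at j y xs))"
    by (simp add: sum.Sigma)
  also have "\<dots> = (\<Sum>t\<in>perm_lists f (insert b B). g t)"
    using sum.reindex_bij_betw[OF bij_betw_insert_at_perm_lists[OF assms(1)], of g]
    by (simp add: case_prod_unfold)
  finally show ?thesis ..
qed

lemma perms_eq_perm_lists: "perms n = perm_lists id {1..n}"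
  by (simp add: perms_def perm_lists_def)

lemma signed_perms_eq_perm_lists: "signed_perms k = perm_lists abs (int ` {1..k})"
  by (simp add: signed_perms_def perm_lists_def)

section \<open>Recurrences for the descent polynomials\<close>

(* The leading 0 is the convention pi_0 = 0 of des_B; on positive letters it does not change des. *)
definition descent_poly :: "'a::{zero,linorder} list set \<Rightarrow> real poly" where
  "descent_poly S = (\<Sum>xs\<in>S. monom 1 (count_descents (0 # xs)))"

lemma descent_poly_singleton_Nil: "descent_poly {[]} = 1"
  by (simp add: descent_poly_def)

lemma fps_of_descent_poly:
  "fps_of_poly (descent_poly S) = (\<Sum>xs\<in>S. fps_X ^ count_descents (0 # xs))"
  by (simp add: descent_poly_def fps_of_poly_sum fps_of_poly_monom')

lemma poly_descent_poly: "poly (descent_poly S) z = (\<Sum>xs\<in>S. z ^ count_descents (0 # xs))"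
  by (simp add: descent_poly_def poly_sum poly_monom)

lemma eulerA_eq_poly_descent_poly: "eulerA n z = z * poly (descent_poly (perms n)) z"
  by (simp add: eulerA_def poly_descent_poly des_eq_count_descents sum_distrib_left)

lemma eulerB_eq_poly_descent_poly: "eulerB k z = poly (descent_poly (signed_perms k)) z"
  by (simp add: eulerB_def poly_descent_poly desB_eq_count_descents)

lemma fps_XD_sum: "fps_XD (\<Sum>x\<in>A. f x) = (\<Sum>x\<in>A. fps_XD (f x :: 'a::comm_ring_1 fps))"
  by (simp add: fps_XD_def fps_deriv_sum sum_distrib_left)

lemma fps_descent_poly_perms_Suc:
  fixes n :: nat
  defines "F \<equiv> \<lambda>n. fps_of_poly (descent_poly (perms n))"
  shows "F (Suc n) = (1 + of_nat n * fps_X) * F n + (1 - fps_X) * fps_XD (F n)"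
proof -
  have perms_Suc: "perms (Suc n) = perm_lists id (insert (Suc n) {1..n})"
    by (simp add: perms_eq_perm_lists atLeastAtMostSuc_conv)
  have "F (Suc n) = (\<Sum>xs\<in>perms n. \<Sum>j\<le>length xs. fps_X ^ count_descents (0 # insert_at j (Suc n) xs))"
    unfolding F_def fps_of_descent_poly perms_Suc
    by (subst sum_perm_lists_insert) (simp_all add: perms_eq_perm_lists)
  also have "\<dots> = (\<Sum>xs\<in>perms n. (1 + of_nat n * fps_X) * fps_X ^ count_descents (0 # xs)
                    + (1 - fps_X) * fps_XD (fps_X ^ count_descents (0 # xs)))"
  proof (rule sum.cong[OF refl])
    fix xs assume "xs \<in> perms n"
    then have xs: "xs \<in> perm_lists id {1..n}"
      by (simp add: perms_eq_perm_lists)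
    then have "length xs = n" "\<forall>v\<in>set (0 # xs). v < Suc n"
      using length_perm_lists[OF xs] by (auto simp: perm_lists_def)
    then show "(\<Sum>j\<le>length xs. (fps_X :: real fps) ^ count_descents (0 # insert_at j (Suc n) xs)) =
        (1 + of_nat n * fps_X) * fps_X ^ count_descents (0 # xs) + (1 - fps_X) * fps_XD (fps_X ^ count_descents (0 # xs))"
      using sum_insert_at_greatest[where 'b = real, of 0 xs "Suc n"] by simp
  qed
  also have "\<dots> = (1 + of_nat n * fps_X) * F n + (1 - fps_X) * fps_XD (F n)"
    by (simp add: F_def fps_of_descent_poly fps_XD_sum sum.distrib sum_distrib_left)
  finally show ?thesis .
qed

lemma fps_descent_poly_signed_perms_Suc:
  fixes k :: nat
  defines "F \<equiv> \<lambda>k. fps_of_poly (descent_poly (signed_perms k))"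
  shows "F (Suc k) = (1 + of_nat (2 * k + 1) * fps_X) * F k + 2 * (1 - fps_X) * fps_XD (F k)"
proof -
  define m where "m = int (Suc k)"
  have signed_perms_Suc: "signed_perms (Suc k) = perm_lists abs (insert m (int ` {1..k}))"
    by (simp add: signed_perms_eq_perm_lists atLeastAtMostSuc_conv m_def)
  have "abs -` {m} = {m, - m}" "m \<noteq> - m"
    by (auto simp: m_def)
  moreover have "finite (abs -` insert m (int ` {1..k}))"
    by (rule finite_subset[of _ "{- m..m}"]) (auto simp: m_def)
  moreover have "m \<notin> int ` {1..k}"
    by (auto simp: m_def)
  ultimately have "F (Suc k) = (\<Sum>xs\<in>signed_perms k.
      (\<Sum>j\<le>length xs. fps_X ^ count_descents (0 # insert_at j m xs))
      + (\<Sum>j\<le>length xs. fps_X ^ count_descents (0 # insert_at j (- m) xs)))"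
    unfolding F_def fps_of_descent_poly signed_perms_Suc
    by (simp add: sum_perm_lists_insert sum.swap[of _ "{m, - m}"] sum.distrib signed_perms_eq_perm_lists)
  also have "\<dots> = (\<Sum>xs\<in>signed_perms k. (1 + of_nat (2 * k + 1) * fps_X) * fps_X ^ count_descents (0 # xs)
                    + 2 * (1 - fps_X) * fps_XD (fps_X ^ count_descents (0 # xs)))"
  proof (rule sum.cong[OF refl])
    fix xs assume "xs \<in> signed_perms k"
    then have xs: "xs \<in> perm_lists abs (int ` {1..k})"
      by (simp add: signed_perms_eq_perm_lists)
    have "length xs = k"
      using length_perm_lists[OF xs] by (simp add: card_image)
    have "\<bar>v\<bar> \<le> int k" if "v \<in> set xs" for v
      using xs that by (force simp: perm_lists_def)
    then have "\<forall>v\<in>set (0 # xs). - m < v \<and> v < m"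
      by (force simp: m_def)
    with \<open>length xs = k\<close> show "(\<Sum>j\<le>length xs. (fps_X :: real fps) ^ count_descents (0 # insert_at j m xs))
      + (\<Sum>j\<le>length xs. fps_X ^ count_descents (0 # insert_at j (- m) xs)) =
        (1 + of_nat (2 * k + 1) * fps_X) * fps_X ^ count_descents (0 # xs)
          + 2 * (1 - fps_X) * fps_XD (fps_X ^ count_descents (0 # xs))"
      using sum_insert_at_extremes[where 'b = real, of 0 xs "- m" m] by simp
  qed
  also have "\<dots> = (1 + of_nat (2 * k + 1) * fps_X) * F k + 2 * (1 - fps_X) * fps_XD (F k)"
    by (simp add: F_def fps_of_descent_poly fps_XD_sum sum.distrib sum_distrib_left)
  finally show ?thesis .
qed

section \<open>Solving the recurrences\<close>

lemma fps_XD_mult_one_minus_X_power: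
  "fps_XD ((1 - fps_X) ^ Suc n * G) =
     (1 - fps_X) ^ Suc n * fps_XD G - of_nat (Suc n) * fps_X * (1 - fps_X) ^ n * (G :: 'a::comm_ring_1 fps)"
proof -
  have deriv: "fps_deriv ((1 - fps_X :: 'a fps) ^ Suc n) = - (of_nat (Suc n) * (1 - fps_X) ^ n)"
    by (simp only: fps_deriv_power') (simp add: algebra_simps)
  show ?thesis
    unfolding fps_XD_def comp_def fps_deriv_mult deriv by (simp add: algebra_simps)
qed

(* Under G \<mapsto> (1 - X)^(n+1) G the recurrence becomes G_(n+1) = a G_n + c X G_n',
   which is solved coefficientwise by (a + c m)^n. *)
lemma fps_recurrence_closed_form:
  fixes F :: "nat \<Rightarrow> 'a::comm_ring_1 fps" and a c :: 'a
  assumes F_0: "F 0 = 1"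
    and F_Suc: "\<And>n. F (Suc n) = (fps_const a + fps_const (c * of_nat (Suc n) - a) * fps_X) * F n
                               + fps_const c * (1 - fps_X) * fps_XD (F n)"
  shows "F n = (1 - fps_X) ^ Suc n * Abs_fps (\<lambda>m. (a + c * of_nat m) ^ n)"
proof (induction n)
  case 0
  have "(1 - fps_X) * Abs_fps (\<lambda>m. 1 :: 'a) = 1"
    by (rule fps_ext) (simp add: left_diff_distrib)
  then show ?case
    by (simp add: F_0)
next
  case (Suc n)
  define G where "G = Abs_fps (\<lambda>m. (a + c * of_nat m) ^ n)"
  have G_Suc: "Abs_fps (\<lambda>m. (a + c * of_nat m) ^ Suc n) = fps_const a * G + fps_const c * fps_XD G"
    by (rule fps_ext) (simp add: G_def fps_XD_def algebra_simps)
  have B: "fps_const (c * of_nat (Suc n) - a) = fps_const c * of_nat (Suc n) - fps_const a"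
    by (simp only: fps_of_nat[symmetric] fps_const_mult fps_const_sub)
  have ring: "(A + (C * N - A) * X) * ((1 - X) * Q * G) + C * (1 - X) * ((1 - X) * Q * D - N * X * Q * G) =
      (1 - X) * ((1 - X) * Q) * (A * G + C * D)" for A C N X Q G D :: "'a fps"
    by (simp add: algebra_simps)
  have "F (Suc n) = (fps_const a + fps_const (c * of_nat (Suc n) - a) * fps_X) * ((1 - fps_X) ^ Suc n * G)
      + fps_const c * (1 - fps_X) * fps_XD ((1 - fps_X) ^ Suc n * G)"
    by (simp only: F_Suc Suc.IH G_def)
  also have "\<dots> = (1 - fps_X) ^ Suc (Suc n) * (fps_const a * G + fps_const c * fps_XD G)"
    unfolding fps_XD_mult_one_minus_X_power B unfolding power_Suc by (rule ring)
  finally show ?case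
    by (simp only: G_Suc)
qed

lemma fps_descent_poly_perms:
  "fps_of_poly (descent_poly (perms n)) = (1 - fps_X) ^ Suc n * Abs_fps (\<lambda>m. (1 + of_nat m) ^ n)"
proof -
  have "fps_of_poly (descent_poly (perms n)) = (1 - fps_X) ^ Suc n * Abs_fps (\<lambda>m. (1 + 1 * of_nat m) ^ n)"
  proof (rule fps_recurrence_closed_form[where F = "\<lambda>n. fps_of_poly (descent_poly (perms n))"])
    have "perms 0 = {[]}"
      by (auto simp: perms_def)
    then show "fps_of_poly (descent_poly (perms 0)) = 1"
      by (simp add: descent_poly_singleton_Nil)
    show "fps_of_poly (descent_poly (perms (Suc n))) =
        (fps_const 1 + fps_const (1 * of_nat (Suc n) - 1) * fps_X) * fps_of_poly (descent_poly (perms n))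
        + fps_const 1 * (1 - fps_X) * fps_XD (fps_of_poly (descent_poly (perms n)))" for n
      using fps_descent_poly_perms_Suc[of n] by (simp add: fps_of_nat)
  qed
  then show ?thesis
    by simp
qed

lemma fps_descent_poly_signed_perms:
  "fps_of_poly (descent_poly (signed_perms k)) = (1 - fps_X) ^ Suc k * Abs_fps (\<lambda>m. (1 + 2 * of_nat m) ^ k)"
proof (rule fps_recurrence_closed_form[where F = "\<lambda>k. fps_of_poly (descent_poly (signed_perms k))"])
  have "signed_perms 0 = {[]}"
    by (auto simp: signed_perms_def)
  then show "fps_of_poly (descent_poly (signed_perms 0)) = 1"
    by (simp add: descent_poly_singleton_Nil)
  show "fps_of_poly (descent_poly (signed_perms (Suc k))) =
      (fps_const 1 + fps_const (2 * of_nat (Suc k) - 1) * fps_X) * fps_of_poly (descent_poly (signed_perms k))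
      + fps_const 2 * (1 - fps_X) * fps_XD (fps_of_poly (descent_poly (signed_perms k)))" for k
  proof -
    have "fps_const (2 * of_nat (Suc k) - 1 :: real) = of_nat (2 * k + 1)"
      by (simp only: fps_of_nat[symmetric]) simp
    then show ?thesis
      using fps_descent_poly_signed_perms_Suc[of k] by (simp add: fps_numeral_fps_const[symmetric])
  qed
qed

section \<open>The convolution identity\<close>

lemma fps_binomial_convolution:
  fixes u v :: "nat \<Rightarrow> 'a::comm_semiring_1"
  shows "(\<Sum>k\<le>n. fps_const (of_nat (n choose k)) * (Abs_fps (\<lambda>i. u i ^ k) * Abs_fps (\<lambda>i. v i ^ (n - k)))) =
           Abs_fps (\<lambda>m. \<Sum>i\<le>m. (u i + v (m - i)) ^ n)"
proof (rule fps_ext)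
  fix m
  have "(\<Sum>k\<le>n. fps_const (of_nat (n choose k)) * (Abs_fps (\<lambda>i. u i ^ k) * Abs_fps (\<lambda>i. v i ^ (n - k)))) $ m =
        (\<Sum>k\<le>n. of_nat (n choose k) * (\<Sum>i\<le>m. u i ^ k * v (m - i) ^ (n - k)))"
    by (simp only: fps_sum_nth fps_mult_left_const_nth) (simp add: fps_mult_nth atLeast0AtMost)
  also have "\<dots> = (\<Sum>i\<le>m. \<Sum>k\<le>n. of_nat (n choose k) * u i ^ k * v (m - i) ^ (n - k))"
    by (simp add: sum_distrib_left mult.assoc sum.swap[of _ "{..n}"])
  also have "\<dots> = Abs_fps (\<lambda>m. \<Sum>i\<le>m. (u i + v (m - i)) ^ n) $ m"
    by (simp add: binomial_ring)
  finally show "(\<Sum>k\<le>n. fps_const (of_nat (n choose k)) * (Abs_fps (\<lambda>i. u i ^ k) * Abs_fps (\<lambda>i. v i ^ (n - k)))) $ m =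
             Abs_fps (\<lambda>m. \<Sum>i\<le>m. (u i + v (m - i)) ^ n) $ m" .
qed

lemma fps_descent_poly_convolution:
  "fps_const (2 ^ n) * fps_of_poly (descent_poly (perms (Suc n))) =
     (\<Sum>k\<le>n. fps_const (of_nat (n choose k)) *
        (fps_of_poly (descent_poly (signed_perms k)) * fps_of_poly (descent_poly (signed_perms (n - k)))))"
proof -
  define G where "G k = Abs_fps (\<lambda>m. (1 + 2 * of_nat m :: real) ^ k)" for k
  have "(\<Sum>k\<le>n. fps_const (of_nat (n choose k)) *
        (fps_of_poly (descent_poly (signed_perms k)) * fps_of_poly (descent_poly (signed_perms (n - k))))) =
      (1 - fps_X) ^ Suc (Suc n) * (\<Sum>k\<le>n. fps_const (of_nat (n choose k)) * (G k * G (n - k)))"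
    unfolding sum_distrib_left
  proof (rule sum.cong[OF refl])
    fix k assume "k \<in> {..n}"
    then have powers: "(1 - fps_X :: real fps) ^ Suc k * (1 - fps_X) ^ Suc (n - k) = (1 - fps_X) ^ Suc (Suc n)"
      by (simp only: power_add[symmetric]) simp
    show "fps_const (of_nat (n choose k)) *
        (fps_of_poly (descent_poly (signed_perms k)) * fps_of_poly (descent_poly (signed_perms (n - k)))) =
        (1 - fps_X) ^ Suc (Suc n) * (fps_const (of_nat (n choose k)) * (G k * G (n - k)))"
      unfolding fps_descent_poly_signed_perms G_def powers[symmetric] by (simp only: mult_ac)
  qed
  also have "(\<Sum>k\<le>n. fps_const (of_nat (n choose k)) * (G k * G (n - k))) =
      Abs_fps (\<lambda>m. \<Sum>i\<le>m. ((1 + 2 * of_nat i) + (1 + 2 * of_nat (m - i))) ^ n)"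
    unfolding G_def by (rule fps_binomial_convolution)
  also have "\<dots> = fps_const (2 ^ n) * Abs_fps (\<lambda>m. (1 + of_nat m) ^ Suc n)"
  proof (rule fps_ext)
    fix m
    have "(\<Sum>i\<le>m. ((1 + 2 * of_nat i) + (1 + 2 * of_nat (m - i))) ^ n) = (\<Sum>i\<le>m. (2 * (1 + of_nat m) :: real) ^ n)"
      by (rule sum.cong) (simp_all add: algebra_simps)
    also have "\<dots> = 2 ^ n * (1 + of_nat m) ^ Suc n"
      by (simp only: sum_constant card_atMost power_mult_distrib) (simp add: algebra_simps)
    finally show "Abs_fps (\<lambda>m. \<Sum>i\<le>m. ((1 + 2 * of_nat i) + (1 + 2 * of_nat (m - i))) ^ n) $ m =
        (fps_const (2 ^ n) * Abs_fps (\<lambda>m. (1 + of_nat m :: real) ^ Suc n)) $ m"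
      by simp
  qed
  finally show ?thesis
    by (simp add: fps_descent_poly_perms mult_ac)
qed

lemma descent_poly_convolution:
  "smult (2 ^ n) (descent_poly (perms (Suc n))) =
     (\<Sum>k\<le>n. smult (of_nat (n choose k)) (descent_poly (signed_perms k) * descent_poly (signed_perms (n - k))))"
  unfolding fps_of_poly_eq_iff[symmetric]
  by (simp add: fps_of_poly_smult fps_of_poly_sum fps_of_poly_mult fps_descent_poly_convolution)

theorem mainTheorem17:
  fixes n :: nat and z :: real
  assumes "n \<ge> 1" and "z \<noteq> 0"
  shows "2 ^ n * eulerA (n + 1) z / z = (\<Sum>k=0..n. real (n choose k) * eulerB k z * eulerB (n - k) z)"
proof -
  \<comment> \<open>The identity holds for \<open>n = 0\<close> as well.\<close>
  have "2 ^ n * poly (descent_poly (perms (Suc n))) z =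
      (\<Sum>k\<le>n. real (n choose k) * eulerB k z * eulerB (n - k) z)"
    using arg_cong[OF descent_poly_convolution, of "\<lambda>p. poly p z"]
    by (simp add: poly_sum eulerB_eq_poly_descent_poly mult.assoc)
  then show ?thesis
    using assms(2) by (simp add: eulerA_eq_poly_descent_poly atLeast0AtMost)
qed

end
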